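(* Let $\rho>0$ be irrational and let $\Gamma_\rho\subset SL_2(\mathbb R)$ be the group generated by $\begin{pmatrix}1&1\\0&1\end{pmatrix}$ and $\begin{pmatrix}1&0\\\rho&1\end{pmatrix}$. Let $\left(\frac{p_n}{q_n}\right)_n$ be the sequence of continued fraction convergents of $\rho+1$. Then there is a constant $C>0$ (depending on $\rho$) such that for every $n$ there exist two distinct points $z_1,z_2$ of the orbit $\Gamma_\rho\binom{1}{0}$ with $\|z_1-z_2\|\le \frac{C}{q_{n+1}}$ and $\|z_1\|,\|z_2\|\le C\,q_nq_{n+1}$.
   Context: $\|\cdot\|$ is the Euclidean norm on $\mathbb R^2$; the group acts on $\mathbb R^2$ by matrix multiplication on column vectors. The convergents $p_n/q_n$ are the standard continued fraction convergents (in lowest terms, $q_n>0$). *)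

theory Defs
  imports "HOL-Analysis.Analysis"
begin

text \<open>Matrices act on column vectors; a matrix is written row by row.\<close>

definition upper_gen :: "real^2^2" where
  "upper_gen = vector [vector [1, 1], vector [0, 1]]"

definition lower_gen :: "real \<Rightarrow> real^2^2" where
  "lower_gen \<rho> = vector [vector [1, 0], vector [\<rho>, 1]]"

inductive_set Gamma :: "real \<Rightarrow> (real^2^2) set" for \<rho> :: real where
  id: "mat 1 \<in> Gamma \<rho>"
| mU: "A \<in> Gamma \<rho> \<Longrightarrow> A ** upper_gen \<in> Gamma \<rho>"
| mUi: "A \<in> Gamma \<rho> \<Longrightarrow> A ** matrix_inv upper_gen \<in> Gamma \<rho>"
| mL: "A \<in> Gamma \<rho> \<Longrightarrow> A ** lower_gen \<rho> \<in> Gamma \<rho>"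
| mLi: "A \<in> Gamma \<rho> \<Longrightarrow> A ** matrix_inv (lower_gen \<rho>) \<in> Gamma \<rho>"

definition orbit_e1 :: "real \<Rightarrow> (real^2) set" where
  "orbit_e1 \<rho> = (\<lambda>A. A *v vector [1, 0]) ` Gamma \<rho>"

fun cf_rem :: "real \<Rightarrow> nat \<Rightarrow> real" where
  "cf_rem x 0 = x"
| "cf_rem x (Suc n) = 1 / frac (cf_rem x n)"

definition cf_a :: "real \<Rightarrow> nat \<Rightarrow> int" where
  "cf_a x n = \<lfloor>cf_rem x n\<rfloor>"

fun cf_p :: "real \<Rightarrow> nat \<Rightarrow> int" where
  "cf_p x 0 = cf_a x 0"
| "cf_p x (Suc 0) = cf_a x 1 * cf_a x 0 + 1"
| "cf_p x (Suc (Suc n)) = cf_a x (n + 2) * cf_p x (Suc n) + cf_p x n"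

fun cf_q :: "real \<Rightarrow> nat \<Rightarrow> int" where
  "cf_q x 0 = 1"
| "cf_q x (Suc 0) = cf_a x 1"
| "cf_q x (Suc (Suc n)) = cf_a x (n + 2) * cf_q x (Suc n) + cf_q x n"

end

theory Submission
  imports Defs
begin

text \<open>Write U, L for the two generators and e_1 = (1, 0). For integers k, m, q the orbit contains
U^k L^m e_1 = (1 + k m \<rho>, m \<rho>) and U^k L^q U L e_1 = (1 + \<rho> + k S, S) with S = \<rho> (1 + q (\<rho> + 1)).
With m = p + 1 their difference is -\<rho> (1 + k e, e), where e = q (\<rho> + 1) - p. For q = q_n and p = p_n
the theory of continued fractions gives 1/(2 q_{n+1}) \<le> |e| \<le> 1/q_{n+1}, and taking k to be the
integer nearest to -1/e makes both coordinates of the difference O(|e|), while both points have norm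
O(q_n / |e|) = O(q_n q_{n+1}).\<close>

definition mat2 :: "real \<Rightarrow> real \<Rightarrow> real \<Rightarrow> real \<Rightarrow> real^2^2" where
  "mat2 a b c d = vector [vector [a, b], vector [c, d]]"

lemma mat2_mult:
  "mat2 a b c d ** mat2 a' b' c' d' = mat2 (a*a' + b*c') (a*b' + b*d') (c*a' + d*c') (c*b' + d*d')"
  by (simp add: matrix_matrix_mult_def vec_eq_iff forall_2 sum_2 mat2_def)

lemma mat2_one: "mat 1 = mat2 1 0 0 1"
  by (simp add: mat_def vec_eq_iff forall_2 mat2_def)

lemma mat2_mult_vector: "mat2 a b c d *v vector [x, y] = vector [a*x + b*y, c*x + d*y]"
  by (simp add: matrix_vector_mult_def vec_eq_iff forall_2 sum_2 mat2_def)

lemma matrix_inv_eqI: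
  fixes A B :: "'a::comm_semiring_1^'n^'n"
  assumes "A ** B = mat 1" "B ** A = mat 1"
  shows "matrix_inv A = B"
proof -
  have "A ** matrix_inv A = mat 1"
    using someI_ex[of "\<lambda>A'. A ** A' = mat 1 \<and> A' ** A = mat 1"] assms
    unfolding matrix_inv_def by blast
  then have "B ** (A ** matrix_inv A) = B"
    by (simp add: matrix_mul_rid)
  then show ?thesis
    by (simp add: matrix_mul_assoc assms(2) matrix_mul_lid)
qed

lemma upper_gen_mat2: "upper_gen = mat2 1 1 0 1"
  by (simp add: upper_gen_def mat2_def)

lemma lower_gen_mat2: "lower_gen \<rho> = mat2 1 0 \<rho> 1"
  by (simp add: lower_gen_def mat2_def)

lemma matrix_inv_upper_gen: "matrix_inv upper_gen = mat2 1 (-1) 0 1"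
  by (rule matrix_inv_eqI) (simp_all add: upper_gen_mat2 mat2_mult mat2_one)

lemma matrix_inv_lower_gen: "matrix_inv (lower_gen \<rho>) = mat2 1 0 (-\<rho>) 1"
  by (rule matrix_inv_eqI) (simp_all add: lower_gen_mat2 mat2_mult mat2_one)

lemma Gamma_mult:
  assumes "A \<in> Gamma \<rho>" "B \<in> Gamma \<rho>"
  shows "A ** B \<in> Gamma \<rho>"
  using assms(2)
proof (induction B rule: Gamma.induct)
  case id
  show ?case using assms(1) by (simp add: matrix_mul_rid)
next
  case (mU B)
  then show ?case using Gamma.mU by (metis matrix_mul_assoc)
next
  case (mUi B)
  then show ?case using Gamma.mUi by (metis matrix_mul_assoc)
next
  case (mL B)
  then show ?case using Gamma.mL by (metis matrix_mul_assoc)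
next
  case (mLi B)
  then show ?case using Gamma.mLi by (metis matrix_mul_assoc)
qed

lemma upper_gen_power_in_Gamma: "mat2 1 (of_int k) 0 1 \<in> Gamma \<rho>"
proof (induction k rule: int_induct[where k = 0])
  case base
  show ?case using Gamma.id by (simp add: mat2_one)
next
  case (step1 i)
  from Gamma.mU[OF step1(2)] show ?case by (simp add: upper_gen_mat2 mat2_mult add.commute)
next
  case (step2 i)
  from Gamma.mUi[OF step2(2)] show ?case by (simp add: matrix_inv_upper_gen mat2_mult)
qed

lemma lower_gen_power_in_Gamma: "mat2 1 0 (of_int k * \<rho>) 1 \<in> Gamma \<rho>"
proof (induction k rule: int_induct[where k = 0])
  case base
  show ?case using Gamma.id by (simp add: mat2_one)
next
  case (step1 i)
  from Gamma.mL[OF step1(2)] show ?case by (simp add: lower_gen_mat2 mat2_mult algebra_simps)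
next
  case (step2 i)
  from Gamma.mLi[OF step2(2)] show ?case by (simp add: matrix_inv_lower_gen mat2_mult algebra_simps)
qed

lemma e1_in_orbit_e1: "vector [1, 0] \<in> orbit_e1 \<rho>"
  using Gamma.id by (force simp: orbit_e1_def)

lemma orbit_e1_left_mult:
  assumes "M \<in> Gamma \<rho>" "v \<in> orbit_e1 \<rho>"
  shows "M *v v \<in> orbit_e1 \<rho>"
  using assms Gamma_mult[OF assms(1)] by (auto simp: orbit_e1_def matrix_vector_mul_assoc)

lemma orbit_e1_upper_shear:
  "vector [a, b] \<in> orbit_e1 \<rho> \<Longrightarrow> vector [a + of_int k * b, b] \<in> orbit_e1 \<rho>"
  using orbit_e1_left_mult[OF upper_gen_power_in_Gamma] by (fastforce simp: mat2_mult_vector)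

lemma orbit_e1_lower_shear:
  "vector [a, b] \<in> orbit_e1 \<rho> \<Longrightarrow> vector [a, b + of_int k * \<rho> * a] \<in> orbit_e1 \<rho>"
  using orbit_e1_left_mult[OF lower_gen_power_in_Gamma] by (fastforce simp: mat2_mult_vector add.commute)

definition UL_point :: "real \<Rightarrow> int \<Rightarrow> int \<Rightarrow> real^2" where
  "UL_point \<rho> k m = vector [1 + k * (m * \<rho>), m * \<rho>]"

definition ULUL_point :: "real \<Rightarrow> int \<Rightarrow> int \<Rightarrow> real^2" where
  "ULUL_point \<rho> k q = vector [\<rho> + 1 + k * (\<rho> * (1 + q * (\<rho> + 1))), \<rho> * (1 + q * (\<rho> + 1))]"

lemma UL_point_in_orbit_e1: "UL_point \<rho> k m \<in> orbit_e1 \<rho>"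
proof -
  have "vector [1, m * \<rho>] \<in> orbit_e1 \<rho>"
    using orbit_e1_lower_shear[OF e1_in_orbit_e1, where k = m] by simp
  then show ?thesis
    unfolding UL_point_def by (rule orbit_e1_upper_shear)
qed

lemma ULUL_point_in_orbit_e1: "ULUL_point \<rho> k q \<in> orbit_e1 \<rho>"
proof -
  have "vector [1, \<rho>] \<in> orbit_e1 \<rho>"
    using orbit_e1_lower_shear[OF e1_in_orbit_e1, where k = 1] by simp
  from orbit_e1_upper_shear[OF this, where k = 1]
  have "vector [\<rho> + 1, \<rho>] \<in> orbit_e1 \<rho>"
    by (simp add: add.commute)
  from orbit_e1_lower_shear[OF this, where k = q]
  have "vector [\<rho> + 1, \<rho> * (1 + q * (\<rho> + 1))] \<in> orbit_e1 \<rho>"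
    by (simp add: algebra_simps)
  then show ?thesis
    unfolding ULUL_point_def by (rule orbit_e1_upper_shear)
qed

lemma UL_point_minus_ULUL_point:
  fixes \<rho> e :: real and k p q :: int
  defines "e \<equiv> of_int q * (\<rho> + 1) - of_int p"
  shows "UL_point \<rho> k (p + 1) - ULUL_point \<rho> k q = vector [- (\<rho> * (1 + k * e)), - (\<rho> * e)]"
  by (simp add: UL_point_def ULUL_point_def e_def vec_eq_iff forall_2 algebra_simps)

lemma norm_vector2_le: "norm (vector [a, b] :: real^2) \<le> \<bar>a\<bar> + \<bar>b\<bar>"
  using norm_le_l1_cart[of "vector [a, b] :: real^2"] by (simp add: sum_2)

lemma norm_UL_point_le:
  assumes "\<rho> \<ge> 0"
  shows "norm (UL_point \<rho> k m) \<le> 1 + (\<bar>k\<bar> + 1) * \<bar>m\<bar> * \<rho>"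
  using norm_vector2_le[of "1 + k * (m * \<rho>)" "m * \<rho>"] assms abs_triangle_ineq[of 1 "k * (m * \<rho>)"]
  by (simp add: UL_point_def abs_mult algebra_simps)

lemma round_neg_inverse_bounds:
  fixes e :: real
  assumes "0 < \<bar>e\<bar>" "\<bar>e\<bar> \<le> 1"
  shows "\<bar>1 + of_int (round (- 1 / e)) * e\<bar> \<le> \<bar>e\<bar> / 2"
    and "\<bar>of_int (round (- 1 / e))\<bar> + 1 \<le> 5 / (2 * \<bar>e\<bar>)"
proof -
  define K where "K = real_of_int (round (- 1 / e))"
  have near: "\<bar>K + 1 / e\<bar> \<le> 1 / 2"
    using of_int_round_abs_le[of "- 1 / e"] by (simp add: K_def)
  have "\<bar>1 + K * e\<bar> = \<bar>e\<bar> * \<bar>K + 1 / e\<bar>"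
    using assms(1) by (simp add: abs_mult[symmetric] field_simps)
  also have "\<dots> \<le> \<bar>e\<bar> / 2"
    using mult_left_mono[OF near, of "\<bar>e\<bar>"] by simp
  finally show "\<bar>1 + of_int (round (- 1 / e)) * e\<bar> \<le> \<bar>e\<bar> / 2"
    by (simp add: K_def)
  have "\<bar>K\<bar> + 1 \<le> 1 / \<bar>e\<bar> + 3 / 2"
    using near abs_triangle_ineq4[of "K + 1 / e" "1 / e"] by (simp add: abs_divide)
  also have "\<dots> \<le> 5 / (2 * \<bar>e\<bar>)"
    using assms by (simp add: field_simps)
  finally show "\<bar>of_int (round (- 1 / e))\<bar> + 1 \<le> 5 / (2 * \<bar>e\<bar>)"
    by (simp add: K_def)
qed

lemma norm_UL_point_minus_ULUL_point_le:
  fixes \<rho> e :: real and p q :: int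
  defines "k \<equiv> round (- 1 / e)"
  assumes "\<rho> \<ge> 0"
    and e: "e = of_int q * (\<rho> + 1) - of_int p" "0 < \<bar>e\<bar>" "\<bar>e\<bar> \<le> 1"
  shows "norm (UL_point \<rho> k (p + 1) - ULUL_point \<rho> k q) \<le> 2 * \<rho> * \<bar>e\<bar>"
proof -
  have "\<bar>1 + k * e\<bar> \<le> \<bar>e\<bar> / 2"
    using round_neg_inverse_bounds(1)[OF e(2,3)] by (simp add: k_def)
  then have "\<rho> * \<bar>1 + k * e\<bar> \<le> \<rho> * \<bar>e\<bar>"
    using \<open>\<rho> \<ge> 0\<close> abs_ge_zero[of "1 + k * e"] by (intro mult_left_mono) linarith+
  moreover have "norm (UL_point \<rho> k (p + 1) - ULUL_point \<rho> k q) \<le> \<rho> * \<bar>1 + k * e\<bar> + \<rho> * \<bar>e\<bar>"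
    using norm_vector2_le[of "- (\<rho> * (1 + k * e))" "- (\<rho> * e)"] \<open>\<rho> \<ge> 0\<close>
    by (simp add: UL_point_minus_ULUL_point e(1) abs_mult)
  ultimately show ?thesis
    by linarith
qed

lemma norm_UL_point_round_le:
  fixes \<rho> e :: real and p q :: int
  defines "k \<equiv> round (- 1 / e)"
  assumes "\<rho> \<ge> 0" "q \<ge> 1"
    and e: "e = of_int q * (\<rho> + 1) - of_int p" "0 < \<bar>e\<bar>" "\<bar>e\<bar> \<le> 1"
  shows "norm (UL_point \<rho> k (p + 1)) \<le> (1 + 5 / 2 * (\<rho> + 3) * \<rho>) * (q / \<bar>e\<bar>)"
proof -
  define s where "s = q / \<bar>e\<bar>"
  have "1 \<le> s"
    using e(2,3) \<open>q \<ge> 1\<close> by (auto simp: s_def field_simps intro: order_trans[of _ q])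
  have k: "(\<bar>k\<bar> + 1) * q \<le> 5 / 2 * s"
    using mult_right_mono[OF round_neg_inverse_bounds(2)[OF e(2,3)], of q] \<open>q \<ge> 1\<close>
    by (simp add: s_def k_def)
  have "p + 1 = \<rho> * q + q - e + 1"
    by (simp add: e(1) algebra_simps)
  moreover have "0 \<le> \<rho> * q"
    using \<open>\<rho> \<ge> 0\<close> \<open>q \<ge> 1\<close> by simp
  ultimately have p: "\<bar>p + 1\<bar> \<le> (\<rho> + 3) * q"
    using e(3) \<open>q \<ge> 1\<close> by (simp add: abs_le_iff algebra_simps)
  have "norm (UL_point \<rho> k (p + 1)) \<le> 1 + (\<bar>k\<bar> + 1) * \<bar>p + 1\<bar> * \<rho>"
    using norm_UL_point_le[of \<rho> k "p + 1"] \<open>\<rho> \<ge> 0\<close> by simp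
  also have "\<dots> \<le> 1 + (\<bar>k\<bar> + 1) * ((\<rho> + 3) * q) * \<rho>"
    using p \<open>\<rho> \<ge> 0\<close> by (simp add: mult_left_mono mult_right_mono)
  also have "\<dots> = 1 + (\<bar>k\<bar> + 1) * q * ((\<rho> + 3) * \<rho>)"
    by (simp add: algebra_simps)
  also have "\<dots> \<le> s + 5 / 2 * s * ((\<rho> + 3) * \<rho>)"
    using k \<open>1 \<le> s\<close> \<open>\<rho> \<ge> 0\<close> by (intro add_mono mult_right_mono) auto
  also have "\<dots> = (1 + 5 / 2 * (\<rho> + 3) * \<rho>) * s"
    by (simp add: algebra_simps)
  finally show ?thesis
    by (simp add: s_def)
qed

lemma orbit_e1_close_pair:
  fixes \<rho> e :: real and p q :: int
  assumes "\<rho> > 0" "q \<ge> 1"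
    and e: "e = of_int q * (\<rho> + 1) - of_int p" "0 < \<bar>e\<bar>" "\<bar>e\<bar> \<le> 1"
  shows "\<exists>z1\<in>orbit_e1 \<rho>. \<exists>z2\<in>orbit_e1 \<rho>. z1 \<noteq> z2 \<and> norm (z1 - z2) \<le> 2 * \<rho> * \<bar>e\<bar> \<and>
    norm z1 \<le> 3 * (\<rho> + 2)\<^sup>2 * (q / \<bar>e\<bar>) \<and> norm z2 \<le> 3 * (\<rho> + 2)\<^sup>2 * (q / \<bar>e\<bar>)"
proof -
  define k where "k = round (- 1 / e)"
  define w1 where "w1 = UL_point \<rho> k (p + 1)"
  define w2 where "w2 = ULUL_point \<rho> k q"
  define s where "s = q / \<bar>e\<bar>"
  have "w1 \<noteq> w2"
    using UL_point_minus_ULUL_point[where \<rho> = \<rho> and k = k and p = p and q = q] e \<open>\<rho> > 0\<close>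
    by (auto simp: w1_def w2_def vec_eq_iff forall_2)
  have dist: "norm (w1 - w2) \<le> 2 * \<rho> * \<bar>e\<bar>"
    unfolding w1_def w2_def k_def using norm_UL_point_minus_ULUL_point_le assms by simp
  have w1: "norm w1 \<le> (1 + 5 / 2 * (\<rho> + 3) * \<rho>) * s"
    unfolding w1_def k_def s_def using norm_UL_point_round_le assms by simp
  have "1 \<le> s"
    using e(2,3) \<open>q \<ge> 1\<close> by (auto simp: s_def field_simps intro: order_trans[of _ q])
  then have "2 * \<rho> * \<bar>e\<bar> \<le> 2 * \<rho> * s"
    using e(3) \<open>\<rho> > 0\<close> by (simp add: mult_left_mono)
  moreover have "norm w2 \<le> norm w1 + norm (w1 - w2)"
    by (metis norm_triangle_sub norm_minus_commute)
  ultimately have w2: "norm w2 \<le> (1 + 2 * \<rho> + 5 / 2 * (\<rho> + 3) * \<rho>) * s"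
    using w1 dist by (simp add: algebra_simps)
  have "1 + 2 * \<rho> + 5 / 2 * (\<rho> + 3) * \<rho> \<le> 3 * (\<rho> + 2)\<^sup>2"
    using \<open>\<rho> > 0\<close> by (simp add: power2_eq_square algebra_simps)
  then have "norm w1 \<le> 3 * (\<rho> + 2)\<^sup>2 * s" "norm w2 \<le> 3 * (\<rho> + 2)\<^sup>2 * s"
    using w1 w2 \<open>\<rho> > 0\<close> mult_right_mono[of _ _ s] \<open>q \<ge> 1\<close> by (auto simp: s_def intro: order_trans)
  moreover have "w1 \<in> orbit_e1 \<rho>" "w2 \<in> orbit_e1 \<rho>"
    unfolding w1_def w2_def by (rule UL_point_in_orbit_e1 ULUL_point_in_orbit_e1)+
  ultimately show ?thesis
    using \<open>w1 \<noteq> w2\<close> dist unfolding s_def by blast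
qed

locale irrational_cf =
  fixes x :: real
  assumes irrational: "x \<notin> \<rat>"
begin

abbreviation "r \<equiv> cf_rem x"
abbreviation "a \<equiv> cf_a x"
abbreviation "P \<equiv> cf_p x"
abbreviation "Q \<equiv> cf_q x"

lemma cf_rem_irrational: "r n \<notin> \<rat>"
proof (induction n)
  case 0
  then show ?case using irrational by simp
next
  case (Suc n)
  show ?case
  proof
    assume "r (Suc n) \<in> \<rat>"
    then have "frac (r n) \<in> \<rat>"
      using Rats_inverse by (force simp: divide_inverse)
    then have "frac (r n) + of_int \<lfloor>r n\<rfloor> \<in> \<rat>"
      by simp
    with Suc show False
      by (simp add: frac_def)
  qed
qed

lemma frac_cf_rem_pos: "frac (r n) > 0"
proof -
  have "r n \<notin> \<int>"
    using cf_rem_irrational Ints_subset_Rats by blast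
  then show ?thesis
    using frac_ge_0[of "r n"] frac_eq_0_iff[of "r n"] by linarith
qed

lemma cf_rem_Suc_gt_1: "r (Suc n) > 1"
  using frac_cf_rem_pos[of n] frac_lt_1[of "r n"] by (simp add: field_simps)

lemma cf_rem_Suc_pos: "r (Suc n) > 0"
  using cf_rem_Suc_gt_1[of n] by linarith

lemma cf_a_Suc_ge_1: "a (Suc n) \<ge> 1"
  using cf_rem_Suc_gt_1[of n] unfolding cf_a_def by (simp add: one_le_floor)

lemma cf_rem_eq: "r n = of_int (a n) + 1 / r (Suc n)"
  using frac_cf_rem_pos[of n] by (simp add: cf_a_def frac_def)

lemma cf_a_rem_bounds: "of_int (a n) \<le> r n" "r n < of_int (a n) + 1"
  unfolding cf_a_def by linarith+

declare cf_rem.simps(2) [simp del]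

definition err :: "nat \<Rightarrow> real" where
  "err n = of_int (Q n) * x - of_int (P n)"

lemma err_0: "err 0 = 1 / r 1"
  using cf_rem_eq[of 0] by (simp add: err_def cf_a_def)

lemma err_Suc: "err (Suc n) = - err n / r (Suc (Suc n))"
proof (induction n)
  case 0
  have "err 1 = of_int (a 1) * err 0 - 1"
    by (simp add: err_def algebra_simps)
  also have "\<dots> = err 0 * (of_int (a 1) - r 1)"
    using err_0 cf_rem_Suc_pos[of 0] by (simp add: field_simps)
  also have "\<dots> = - err 0 / r 2"
    using cf_rem_eq[of 1] by (simp add: numeral_2_eq_2)
  finally show ?case
    by (simp add: numeral_2_eq_2)
next
  case (Suc m)
  have "err (Suc (Suc m)) = of_int (a (m + 2)) * err (Suc m) + err m"
    by (simp add: err_def algebra_simps)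
  also have "\<dots> = err (Suc m) * (of_int (a (m + 2)) - r (Suc (Suc m)))"
    using Suc cf_rem_Suc_pos[of "Suc m"] by (simp add: field_simps)
  also have "\<dots> = - err (Suc m) / r (Suc (Suc (Suc m)))"
    using cf_rem_eq[of "Suc (Suc m)"] by simp
  finally show ?case .
qed

definition Q_prev :: "nat \<Rightarrow> int" where
  "Q_prev n = (if n = 0 then 0 else Q (n - 1))"

lemma cf_q_Suc: "Q (Suc n) = a (Suc n) * Q n + Q_prev n"
  by (cases n) (simp_all add: Q_prev_def)

lemma cf_q_ge_1: "Q n \<ge> 1"
proof -
  have "Q n \<ge> 1 \<and> Q (Suc n) \<ge> 1"
  proof (induction n)
    case 0
    then show ?case using cf_a_Suc_ge_1[of 0] by simp
  next
    case (Suc n)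
    then show ?case
      using cf_a_Suc_ge_1[of "Suc n"] mult_mono[of 1 "a (n + 2)" 1 "Q (Suc n)"] by simp
  qed
  then show ?thesis ..
qed

lemma Q_prev_nonneg: "0 \<le> Q_prev n"
  using cf_q_ge_1[of "n - 1"] by (simp add: Q_prev_def)

lemma cf_q_le_Suc: "Q n \<le> Q (Suc n)"
proof -
  have "1 * Q n \<le> a (Suc n) * Q n"
    using cf_a_Suc_ge_1[of n] cf_q_ge_1[of n] by (intro mult_right_mono) auto
  then show ?thesis
    using Q_prev_nonneg[of n] by (simp add: cf_q_Suc)
qed

lemma Q_prev_le: "Q_prev n \<le> Q n"
  using cf_q_le_Suc[of "n - 1"] by (cases n) (simp_all add: Q_prev_def)

lemma abs_err_eq: "\<bar>err n\<bar> * (of_int (Q n) * r (Suc n) + of_int (Q_prev n)) = 1"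
proof (induction n)
  case 0
  then show ?case using err_0 cf_rem_Suc_pos[of 0] by (simp add: Q_prev_def)
next
  case (Suc n)
  have pos: "r (Suc (Suc n)) > 0" by (rule cf_rem_Suc_pos)
  have "\<bar>err (Suc n)\<bar> * (of_int (Q (Suc n)) * r (Suc (Suc n)) + of_int (Q_prev (Suc n)))
      = \<bar>err n\<bar> * (of_int (Q (Suc n)) + of_int (Q n) / r (Suc (Suc n)))"
    using pos by (simp add: err_Suc Q_prev_def abs_divide field_simps)
  also have "\<dots> = \<bar>err n\<bar> * (of_int (Q n) * r (Suc n) + of_int (Q_prev n))"
    using cf_rem_eq[of "Suc n"] by (simp add: cf_q_Suc algebra_simps add_divide_distrib)
  finally show ?case using Suc by simp
qed

lemma abs_err_bounds:
  "1 / (2 * of_int (Q (Suc n))) \<le> \<bar>err n\<bar>" "\<bar>err n\<bar> \<le> 1 / of_int (Q (Suc n))"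
proof -
  define D where "D = of_int (Q n) * r (Suc n) + of_int (Q_prev n)"
  have Q: "1 \<le> Q n" "Q n \<le> Q (Suc n)" "0 \<le> Q_prev n" "Q_prev n \<le> Q n"
    using cf_q_ge_1 cf_q_le_Suc Q_prev_nonneg Q_prev_le by auto
  have lower: "of_int (Q (Suc n)) \<le> D"
    using mult_left_mono[OF cf_a_rem_bounds(1), of "of_int (Q n)" "Suc n"] Q
    by (simp add: D_def cf_q_Suc algebra_simps)
  have "D \<le> of_int (Q n) * (of_int (a (Suc n)) + 1) + of_int (Q_prev n)"
    using mult_left_mono[OF less_imp_le[OF cf_a_rem_bounds(2)], of "of_int (Q n)" "Suc n"] Q
    by (simp add: D_def)
  also have "\<dots> = of_int (Q (Suc n)) + of_int (Q n)"
    by (simp add: cf_q_Suc algebra_simps)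
  also have "\<dots> \<le> 2 * of_int (Q (Suc n))"
    using Q by simp
  finally have upper: "D \<le> 2 * of_int (Q (Suc n))" .
  have "(0::real) < of_int (Q (Suc n))"
    using Q by simp
  moreover have "\<bar>err n\<bar> = 1 / D"
    using abs_err_eq[of n] lower \<open>0 < of_int (Q (Suc n))\<close> by (simp add: D_def field_simps)
  ultimately show "1 / (2 * of_int (Q (Suc n))) \<le> \<bar>err n\<bar>" "\<bar>err n\<bar> \<le> 1 / of_int (Q (Suc n))"
    using lower upper by (simp_all add: frac_le)
qed

lemma abs_err_pos: "0 < \<bar>err n\<bar>"
proof -
  have "0 < 1 / (2 * real_of_int (Q (Suc n)))"
    using cf_q_ge_1[of "Suc n"] by simp
  then show ?thesis
    using abs_err_bounds(1)[of n] by linarith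
qed

lemma abs_err_le_1: "\<bar>err n\<bar> \<le> 1"
proof -
  have "1 / real_of_int (Q (Suc n)) \<le> 1"
    using cf_q_ge_1[of "Suc n"] by simp
  then show ?thesis
    using abs_err_bounds(2)[of n] by linarith
qed

lemma cf_q_div_abs_err_le: "of_int (Q n) / \<bar>err n\<bar> \<le> 2 * of_int (Q n * Q (Suc n))"
proof -
  have "1 / \<bar>err n\<bar> \<le> 2 * of_int (Q (Suc n))"
    using abs_err_bounds(1)[of n] abs_err_pos[of n] cf_q_ge_1[of "Suc n"] by (simp add: field_simps)
  then have "of_int (Q n) * (1 / \<bar>err n\<bar>) \<le> of_int (Q n) * (2 * of_int (Q (Suc n)))"
    using cf_q_ge_1[of n] by (intro mult_left_mono) auto
  then show ?thesis
    by simp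
qed

end

lemma orbit_e1_close_pair_cf:
  fixes \<rho> :: real
  assumes "\<rho> > 0" "\<rho> \<notin> \<rat>"
  defines "C \<equiv> 6 * (\<rho> + 2)\<^sup>2"
  shows "\<exists>z1\<in>orbit_e1 \<rho>. \<exists>z2\<in>orbit_e1 \<rho>. z1 \<noteq> z2 \<and>
           norm (z1 - z2) \<le> C / real_of_int (cf_q (\<rho> + 1) (Suc n)) \<and>
           norm z1 \<le> C * real_of_int (cf_q (\<rho> + 1) n * cf_q (\<rho> + 1) (Suc n)) \<and>
           norm z2 \<le> C * real_of_int (cf_q (\<rho> + 1) n * cf_q (\<rho> + 1) (Suc n))"
proof -
  interpret irrational_cf "\<rho> + 1"
    using assms(2) Rats_diff[of "\<rho> + 1" 1] by unfold_locales auto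
  obtain z1 z2 where z: "z1 \<in> orbit_e1 \<rho>" "z2 \<in> orbit_e1 \<rho>" "z1 \<noteq> z2"
    "norm (z1 - z2) \<le> 2 * \<rho> * \<bar>err n\<bar>"
    "norm z1 \<le> 3 * (\<rho> + 2)\<^sup>2 * (Q n / \<bar>err n\<bar>)" "norm z2 \<le> 3 * (\<rho> + 2)\<^sup>2 * (Q n / \<bar>err n\<bar>)"
    using orbit_e1_close_pair[OF \<open>\<rho> > 0\<close> cf_q_ge_1 err_def abs_err_pos abs_err_le_1] by blast
  have "3 * (\<rho> + 2)\<^sup>2 * (Q n / \<bar>err n\<bar>) \<le> 3 * (\<rho> + 2)\<^sup>2 * (2 * real_of_int (Q n * Q (Suc n)))"
    by (rule mult_left_mono[OF cf_q_div_abs_err_le]) simp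
  also have "\<dots> = C * real_of_int (Q n * Q (Suc n))"
    by (simp add: C_def)
  finally have "3 * (\<rho> + 2)\<^sup>2 * (Q n / \<bar>err n\<bar>) \<le> C * real_of_int (Q n * Q (Suc n))" .
  moreover have "2 * \<rho> * \<bar>err n\<bar> \<le> C * (1 / Q (Suc n))"
  proof (rule mult_mono[OF _ abs_err_bounds(2)])
    show "2 * \<rho> \<le> C"
      using \<open>\<rho> > 0\<close> by (simp add: C_def power2_sum)
  qed (simp_all add: C_def)
  ultimately show ?thesis
    using z by (auto intro: order_trans)
qed

theorem proposition1p4:
  fixes \<rho> :: real
  assumes "\<rho> > 0" and "\<rho> \<notin> \<rat>"
  shows "\<exists>C>0. \<forall>n. \<exists>z1\<in>orbit_e1 \<rho>. \<exists>z2\<in>orbit_e1 \<rho>. z1 \<noteq> z2 \<and>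
           norm (z1 - z2) \<le> C / real_of_int (cf_q (\<rho> + 1) (Suc n)) \<and>
           norm z1 \<le> C * real_of_int (cf_q (\<rho> + 1) n * cf_q (\<rho> + 1) (Suc n)) \<and>
           norm z2 \<le> C * real_of_int (cf_q (\<rho> + 1) n * cf_q (\<rho> + 1) (Suc n))"
proof (intro exI conjI allI)
  show "6 * (\<rho> + 2)\<^sup>2 > 0"
    using \<open>\<rho> > 0\<close> by simp
qed (rule orbit_e1_close_pair_cf[OF assms])

end
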